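(* Let $(T,s)$ be a signed tree that realizes a set $D$ of integers with $-1\notin D$. If $v$ is a vertex of $T$ with $sdeg(v)<0$, then $v$ is not a pendant vertex and $v$ is not adjacent to a limiting pendant vertex.
   Context: A signed tree is a pair $(T,s)$ where $T$ is a finite tree and $s:E(T)\to\{+,-\}$. The signed degree $sdeg(v)$ of a vertex is the number of incident positive edges minus the number of incident negative edges. $(T,s)$ realizes $D$ if $D=\{sdeg(v):v\in V(T)\}$. A pendant vertex is a vertex of degree $1$. A vertex of a tree $T$ is a limiting pendant vertex if it is an end vertex of some longest path of $T$. *)

theory Defs
  imports Main
begin

definition walk :: "'a set set \<Rightarrow> 'a list \<Rightarrow> bool" where
  "walk E xs \<longleftrightarrow> xs \<noteq> [] \<and> (\<forall>i. Suc i < length xs \<longrightarrow> {xs ! i, xs ! Suc i} \<in> E)"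

definition gpath :: "'a set set \<Rightarrow> 'a list \<Rightarrow> bool" where
  "gpath E xs \<longleftrightarrow> walk E xs \<and> distinct xs"

definition gcycle :: "'a set set \<Rightarrow> 'a list \<Rightarrow> bool" where
  "gcycle E xs \<longleftrightarrow> walk E xs \<and> length xs \<ge> 4 \<and> hd xs = last xs \<and> distinct (tl xs)"

definition is_tree :: "'a set \<Rightarrow> 'a set set \<Rightarrow> bool" where
  "is_tree V E \<longleftrightarrow> finite V \<and> V \<noteq> {} \<and>
     (\<forall>e\<in>E. \<exists>u v. e = {u, v} \<and> u \<in> V \<and> v \<in> V \<and> u \<noteq> v) \<and>
     (\<forall>u\<in>V. \<forall>v\<in>V. \<exists>p. gpath E p \<and> hd p = u \<and> last p = v) \<and>
     (\<nexists>c. gcycle E c)"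

definition degree :: "'a set set \<Rightarrow> 'a \<Rightarrow> nat" where
  "degree E v = card {e \<in> E. v \<in> e}"

text \<open>Signing: s e = True means e is positive, False means negative.\<close>
definition sdeg :: "'a set set \<Rightarrow> ('a set \<Rightarrow> bool) \<Rightarrow> 'a \<Rightarrow> int" where
  "sdeg E s v = int (card {e \<in> E. v \<in> e \<and> s e}) - int (card {e \<in> E. v \<in> e \<and> \<not> s e})"

definition realizes :: "'a set \<Rightarrow> 'a set set \<Rightarrow> ('a set \<Rightarrow> bool) \<Rightarrow> int set \<Rightarrow> bool" where
  "realizes V E s D \<longleftrightarrow> D = sdeg E s ` V"

definition pendant :: "'a set set \<Rightarrow> 'a \<Rightarrow> bool" where
  "pendant E v \<longleftrightarrow> degree E v = 1"

definition longest_path :: "'a set set \<Rightarrow> 'a list \<Rightarrow> bool" where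
  "longest_path E p \<longleftrightarrow> gpath E p \<and> (\<forall>q. gpath E q \<longrightarrow> length q \<le> length p)"

definition limiting_pendant :: "'a set set \<Rightarrow> 'a \<Rightarrow> bool" where
  "limiting_pendant E v \<longleftrightarrow> (\<exists>p. longest_path E p \<and> (v = hd p \<or> v = last p))"

end

(*
  A pendant vertex has signed degree 1 or -1, and -1 is not realized, so every edge at a
  pendant vertex is positive and a pendant vertex has positive signed degree.

  Let u, v, ... be a longest path starting at the limiting pendant vertex u. Any neighbour w
  of v off the rest of the path can replace u, giving another longest path w, v, ...; the end
  of a longest path is pendant, so the edge vw is positive. Since T has no cycles, v has at most
  one neighbour on the rest of the path. Hence v carries the positive edge uv and at most one
  negative edge, so sdeg v >= 0.
*)
theory Submission
  imports Defs
begin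

lemma walk_Cons_Cons: "walk E (a # b # xs) \<longleftrightarrow> {a, b} \<in> E \<and> walk E (b # xs)"
  by (auto simp: walk_def nth_Cons split: nat.splits)

lemma walk_singleton [simp]: "walk E [a]"
  by (simp add: walk_def)

lemma walk_snoc: "xs \<noteq> [] \<Longrightarrow> walk E (xs @ [y]) \<longleftrightarrow> walk E xs \<and> {last xs, y} \<in> E"
  by (induction xs rule: induct_list012) (auto simp: walk_Cons_Cons)

lemma walk_rev [simp]: "walk E (rev xs) \<longleftrightarrow> walk E xs"
proof (induction xs rule: induct_list012)
  case (3 x y zs)
  have "walk E (rev (x # y # zs)) \<longleftrightarrow> walk E (rev (y # zs)) \<and> {y, x} \<in> E"
    using walk_snoc[of "rev (y # zs)" E x] by simp
  with "3.IH"(2) show ?case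
    by (auto simp: walk_Cons_Cons insert_commute)
qed (auto simp: walk_def)

lemma walk_take: "walk E xs \<Longrightarrow> 0 < n \<Longrightarrow> walk E (take n xs)"
  by (auto simp: walk_def)

lemma walk_drop: "walk E xs \<Longrightarrow> n < length xs \<Longrightarrow> walk E (drop n xs)"
  by (auto simp: walk_def)

lemma gpath_Cons_Cons:
  "gpath E (a # b # xs) \<longleftrightarrow> {a, b} \<in> E \<and> a \<notin> set (b # xs) \<and> gpath E (b # xs)"
  by (auto simp: gpath_def walk_Cons_Cons)

lemma gpath_rev [simp]: "gpath E (rev p) \<longleftrightarrow> gpath E p"
  by (simp add: gpath_def)

lemma gpath_segment:
  assumes "gpath E p" "i \<le> j" "j < length p"
  shows "gpath E (drop i (take (Suc j) p))"
  using assms by (simp add: gpath_def walk_drop walk_take distinct_drop distinct_take)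

lemma tree_edge_neq: "is_tree V E \<Longrightarrow> {a, b} \<in> E \<Longrightarrow> a \<noteq> b"
  unfolding is_tree_def by (metis doubleton_eq_iff insert_absorb2)

lemma tree_edge_other_end:
  assumes "is_tree V E" "e \<in> E" "w \<in> e"
  obtains y where "e = {w, y}"
  using assms unfolding is_tree_def by (metis empty_iff insert_commute insert_iff)

lemma tree_edges_subset_Pow: "is_tree V E \<Longrightarrow> E \<subseteq> Pow V"
  unfolding is_tree_def by fastforce

lemma tree_finite_edges: "is_tree V E \<Longrightarrow> finite E"
  using tree_edges_subset_Pow by (metis finite_Pow_iff finite_subset is_tree_def)

lemma tree_no_closing_edge:
  assumes "is_tree V E" "gpath E q" "3 \<le> length q" "{last q, hd q} \<in> E"
  shows False
proof -
  obtain a r where q: "q = a # r"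
    using assms(3) by (cases q) auto
  have "gcycle E (last q # q)"
    using assms(2-4) by (auto simp: gcycle_def gpath_def q walk_Cons_Cons)
  then show False
    using assms(1) by (auto simp: is_tree_def)
qed

lemma tree_path_chord:
  assumes tree: "is_tree V E" and p: "gpath E p" and ij: "i < j" "j < length p"
    and chord: "{p ! i, p ! j} \<in> E"
  shows "j = Suc i"
proof (rule ccontr)
  assume "j \<noteq> Suc i"
  define q where "q = drop i (take (Suc j) p)"
  have "gpath E q"
    unfolding q_def using gpath_segment[OF p] ij by simp
  moreover have "3 \<le> length q"
    unfolding q_def using ij \<open>j \<noteq> Suc i\<close> by simp
  moreover have "hd q = p ! i" "last q = p ! j"
    unfolding q_def using ij by (simp_all add: hd_drop_conv_nth last_conv_nth)
  ultimately show False
    using tree_no_closing_edge[OF tree] chord by (metis insert_commute)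
qed

lemma tree_path_neighbour_in_path:
  assumes "is_tree V E" "gpath E (v # p)" "{v, w} \<in> E" "w \<in> set p"
  shows "w = hd p"
proof -
  obtain k where k: "k < length p" "p ! k = w"
    using assms(4) by (metis in_set_conv_nth)
  have "Suc k = Suc 0"
    using tree_path_chord[OF assms(1,2), of 0 "Suc k"] k assms(3) by simp
  then show ?thesis
    using k by (simp add: hd_conv_nth)
qed

lemma longest_path_rev: "longest_path E p \<Longrightarrow> longest_path E (rev p)"
  by (simp add: longest_path_def)

lemma limiting_pendant_obtain_path:
  assumes "limiting_pendant E u"
  obtains p where "longest_path E (u # p)"
proof -
  obtain q where q: "longest_path E q" "u = hd q \<or> u = last q"
    using assms unfolding limiting_pendant_def by blast
  then obtain q' where q': "longest_path E q'" "hd q' = u"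
    using longest_path_rev by (metis hd_rev)
  moreover have "q' \<noteq> []"
    using q'(1) by (simp add: longest_path_def gpath_def walk_def)
  ultimately show thesis
    using that by (metis list.collapse)
qed

lemma longest_path_hd_neighbour:
  assumes tree: "is_tree V E" and lp: "longest_path E (u # p)" and uw: "{u, w} \<in> E"
  shows "p \<noteq> [] \<and> hd p = w"
proof (cases "w \<in> set p")
  case True
  then show ?thesis
    using tree_path_neighbour_in_path[OF tree _ uw] lp by (auto simp: longest_path_def)
next
  case False
  then have "gpath E (w # u # p)"
    using lp uw tree_edge_neq[OF tree uw]
    by (auto simp: longest_path_def gpath_def walk_Cons_Cons insert_commute)
  then show ?thesis
    using lp unfolding longest_path_def by fastforce
qed

lemma longest_path_hd_edges:
  assumes tree: "is_tree V E" and lp: "longest_path E (u # v # p)"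
  shows "{e \<in> E. u \<in> e} = {{u, v}}"
proof -
  have "e = {u, v}" if e: "e \<in> E" "u \<in> e" for e
  proof -
    obtain w where "e = {u, w}"
      using tree_edge_other_end[OF tree e] .
    then show ?thesis
      using longest_path_hd_neighbour[OF tree lp] e(1) by simp
  qed
  moreover have "{u, v} \<in> E"
    using lp by (simp add: longest_path_def gpath_Cons_Cons)
  ultimately show ?thesis
    by blast
qed

lemma longest_path_replace_hd:
  assumes "longest_path E (u # v # p)" "{w, v} \<in> E" "w \<notin> set (v # p)"
  shows "longest_path E (w # v # p)"
  using assms by (auto simp: longest_path_def gpath_Cons_Cons)

lemma longest_path_second_neighbour_edges:
  assumes tree: "is_tree V E" and lp: "longest_path E (u # v # p)"
    and vw: "{v, w} \<in> E" and w: "w \<notin> set p"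
  shows "{e \<in> E. w \<in> e} = {{w, v}}"
proof -
  have "w \<noteq> v"
    using tree_edge_neq[OF tree vw] by blast
  then have "longest_path E (w # v # p)"
    using longest_path_replace_hd[OF lp] vw w by (simp add: insert_commute)
  then show ?thesis
    using longest_path_hd_edges[OF tree] by blast
qed

lemma sdeg_single_edge:
  assumes "{e \<in> E. w \<in> e} = {e0}"
  shows "sdeg E s w = (if s e0 then 1 else -1)"
proof -
  have pos: "{e \<in> E. w \<in> e \<and> s e} = {e \<in> E. w \<in> e} \<inter> Collect s"
    and neg: "{e \<in> E. w \<in> e \<and> \<not> s e} = {e \<in> E. w \<in> e} - Collect s"
    by blast+
  show ?thesis
    unfolding sdeg_def pos neg assms by (cases "s e0") (simp_all add: insert_Diff_if)
qed

lemma realizes_single_edge_positive: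
  assumes "realizes V E s D" "-1 \<notin> D" "w \<in> V" "{e \<in> E. w \<in> e} = {e0}"
  shows "s e0"
proof -
  have "sdeg E s w \<in> D"
    using assms(1,3) by (simp add: realizes_def)
  with assms(2) show ?thesis
    by (metis sdeg_single_edge[OF assms(4)])
qed

lemma realizes_pendant_sdeg:
  assumes "realizes V E s D" "-1 \<notin> D" "v \<in> V" "pendant E v"
  shows "sdeg E s v = 1"
proof -
  obtain e where e: "{e' \<in> E. v \<in> e'} = {e}"
    using assms(4) unfolding pendant_def degree_def by (meson card_1_singletonE)
  then have "s e"
    using realizes_single_edge_positive[OF assms(1-3)] by blast
  then show ?thesis
    by (simp add: sdeg_single_edge[OF e])
qed

lemma sdeg_nonneg_if_at_most_one_negative_edge:
  assumes "finite E" "e \<in> E" "v \<in> e" "s e" "{e \<in> E. v \<in> e \<and> \<not> s e} \<subseteq> {e'}"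
  shows "0 \<le> sdeg E s v"
proof -
  have "card {e \<in> E. v \<in> e \<and> \<not> s e} \<le> 1"
    using card_mono[OF _ assms(5)] by simp
  moreover have "1 \<le> card {e \<in> E. v \<in> e \<and> s e}"
    using card_mono[of "{e \<in> E. v \<in> e \<and> s e}" "{e}"] assms(1-4) by simp
  ultimately show ?thesis
    unfolding sdeg_def by linarith
qed

lemma longest_path_negative_edge_at_second:
  assumes tree: "is_tree V E" and real: "realizes V E s D" "-1 \<notin> D"
    and lp: "longest_path E (u # v # p)" and e: "e \<in> E" "v \<in> e" "\<not> s e"
  shows "e = {v, hd p}"
proof -
  obtain w where ew: "e = {v, w}"
    using tree_edge_other_end[OF tree e(1,2)] .
  have "w \<in> set p"
  proof (rule ccontr)
    assume "w \<notin> set p"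
    then have "{e' \<in> E. w \<in> e'} = {e}"
      using longest_path_second_neighbour_edges[OF tree lp] e(1) ew by (simp add: insert_commute)
    moreover have "w \<in> V"
      using tree_edges_subset_Pow[OF tree] e(1) ew by blast
    ultimately show False
      using realizes_single_edge_positive[OF real] e(3) by blast
  qed
  moreover have "gpath E (v # p)"
    using lp by (simp add: longest_path_def gpath_Cons_Cons)
  ultimately show ?thesis
    using tree_path_neighbour_in_path[OF tree] e(1) ew by blast
qed

theorem mainTheorem4:
  fixes V :: "'a set" and E :: "'a set set" and s :: "'a set \<Rightarrow> bool" and D :: "int set"
  assumes "is_tree V E"
    and "realizes V E s D"
    and "-1 \<notin> D"
    and "v \<in> V"
    and "sdeg E s v < 0"
  shows "\<not> pendant E v \<and> (\<forall>u. {u, v} \<in> E \<longrightarrow> \<not> limiting_pendant E u)"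
proof (intro conjI allI impI notI)
  assume "pendant E v"
  with assms(5) show False
    using realizes_pendant_sdeg[OF assms(2-4)] by simp
next
  fix u
  assume uv: "{u, v} \<in> E" and "limiting_pendant E u"
  then obtain p where lp: "longest_path E (u # p)"
    by (blast elim: limiting_pendant_obtain_path)
  then obtain p' where lp': "longest_path E (u # v # p')"
    using longest_path_hd_neighbour[OF assms(1) lp uv] by (metis list.collapse)
  have "u \<in> V"
    using tree_edges_subset_Pow[OF assms(1)] uv by blast
  then have pos: "s {u, v}"
    using realizes_single_edge_positive[OF assms(2,3)] longest_path_hd_edges[OF assms(1) lp']
    by blast
  have neg: "{e \<in> E. v \<in> e \<and> \<not> s e} \<subseteq> {{v, hd p'}}"
    using longest_path_negative_edge_at_second[OF assms(1-3) lp'] by blast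
  have "0 \<le> sdeg E s v"
    using sdeg_nonneg_if_at_most_one_negative_edge[OF tree_finite_edges[OF assms(1)] uv _ pos neg]
    by simp
  with assms(5) show False
    by linarith
qed

end
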